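(* Let $d\ge1$, let $\Gamma$ be the free group on $d$ generators $a_1,\dots,a_d$, and let $T_{2d}$ be the Cayley graph of $\Gamma$ with respect to $\{a_1,\dots,a_d\}$ (a $2d$-regular tree), with $\Gamma$ acting by left multiplication; set $G=\mathrm{Aut}(T_{2d})$ and view $\Gamma\le G$. Let $K_d\trianglelefteq\Gamma$ be the kernel of the abelianization $\Gamma\to\mathbb Z^d$ (so $T_{2d}/K_d$ is the Cayley graph of $\mathbb Z^d$ with respect to the standard generators). Then $\mathrm{Comm}_G(K_d)\cap\mathrm{Comm}_G(\Gamma)$ is discrete in $G$.
   Context: $G$ carries the compact-open (permutation) topology. $\mathrm{Comm}_G(A)=\{g\in G: gAg^{-1}\cap A$ has finite index in both $A$ and $gAg^{-1}\}$. *)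

theory Defs
  imports "HOL-Algebra.Bij" "HOL-Algebra.Coset"
begin

text \<open>A letter (i, True) stands for a_i, (i, False) for a_i^-1.\<close>
type_synonym letter = "nat \<times> bool"

fun reduced :: "letter list \<Rightarrow> bool" where
  "reduced [] = True"
| "reduced [x] = True"
| "reduced (x # y # ys) = ((\<not> (fst x = fst y \<and> snd x \<noteq> snd y)) \<and> reduced (y # ys))"

fun cons_red :: "letter \<Rightarrow> letter list \<Rightarrow> letter list" where
  "cons_red x [] = [x]"
| "cons_red x (y # ys) = (if fst x = fst y \<and> snd x \<noteq> snd y then ys else x # y # ys)"

text \<open>Product in the free group: reduced form of the concatenation u v (v reduced).\<close>
definition mult_red :: "letter list \<Rightarrow> letter list \<Rightarrow> letter list" where
  "mult_red u v = foldr cons_red u v"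

text \<open>Elements of the free group Gamma on a_0,...,a_(d-1) = vertices of T_2d.\<close>
definition FG :: "nat \<Rightarrow> letter list set" where
  "FG d = {w. reduced w \<and> (\<forall>x\<in>set w. fst x < d)}"

text \<open>Cayley graph of Gamma w.r.t. {a_i}: u ~ u a_i^(+-1).\<close>
definition tree_adj :: "nat \<Rightarrow> letter list \<Rightarrow> letter list \<Rightarrow> bool" where
  "tree_adj d u v = (\<exists>i<d. \<exists>b. v = mult_red u [(i, b)])"

definition AutT :: "nat \<Rightarrow> (letter list \<Rightarrow> letter list) monoid" where
  "AutT d = (BijGroup (FG d))\<lparr>carrier :=
     {f \<in> Bij (FG d). \<forall>u\<in>FG d. \<forall>v\<in>FG d. tree_adj d u v \<longleftrightarrow> tree_adj d (f u) (f v)}\<rparr>"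

definition lmul :: "nat \<Rightarrow> letter list \<Rightarrow> letter list \<Rightarrow> letter list" where
  "lmul d g = (\<lambda>w\<in>FG d. mult_red g w)"

definition Gamma :: "nat \<Rightarrow> (letter list \<Rightarrow> letter list) set" where
  "Gamma d = lmul d ` FG d"

text \<open>Exponent sum of generator a_i in w: the i-th coordinate of the abelianization.\<close>
definition expsum :: "nat \<Rightarrow> letter list \<Rightarrow> int" where
  "expsum i w = (\<Sum>x\<leftarrow>w. if fst x = i then (if snd x then 1 else -1) else 0)"

definition Kd :: "nat \<Rightarrow> (letter list \<Rightarrow> letter list) set" where
  "Kd d = lmul d ` {w \<in> FG d. \<forall>i<d. expsum i w = 0}"

text \<open>B has finite index in A (B a subgroup of A inside the group G).\<close>
definition finite_index :: "('a, 'b) monoid_scheme \<Rightarrow> 'a set \<Rightarrow> 'a set \<Rightarrow> bool" where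
  "finite_index G B A = finite (rcosets\<^bsub>G\<lparr>carrier := A\<rparr>\<^esub> B)"

definition conj_set :: "('a, 'b) monoid_scheme \<Rightarrow> 'a \<Rightarrow> 'a set \<Rightarrow> 'a set" where
  "conj_set G g A = (\<lambda>a. g \<otimes>\<^bsub>G\<^esub> a \<otimes>\<^bsub>G\<^esub> inv\<^bsub>G\<^esub> g) ` A"

definition Comm :: "('a, 'b) monoid_scheme \<Rightarrow> 'a set \<Rightarrow> 'a set" where
  "Comm G A = {g \<in> carrier G.
      finite_index G (conj_set G g A \<inter> A) A \<and>
      finite_index G (conj_set G g A \<inter> A) (conj_set G g A)}"

text \<open>Discreteness of a subset S of G in the permutation (pointwise convergence)
  topology: each g in S has a basic neighbourhood {h. h = g on F}, F finite,
  meeting S only in g.\<close>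
definition discrete_in_AutT :: "nat \<Rightarrow> (letter list \<Rightarrow> letter list) set \<Rightarrow> bool" where
  "discrete_in_AutT d S = (\<forall>g\<in>S. \<exists>F. finite F \<and> F \<subseteq> FG d \<and>
      (\<forall>h\<in>S. (\<forall>x\<in>F. h x = g x) \<longrightarrow> h = g))"

end

theory Submission
  imports Defs
begin

text \<open>
  Let \<open>g\<close> commensurate both \<open>\<Gamma>\<close> and \<open>K\<^sub>d\<close>, put \<open>p = g\<^sup>-\<^sup>1\<close> and let \<open>\<psi>\<^sub>i\<close> be the
  \<open>i\<close>-th exponent sum of \<open>p\<close>. As \<open>p\<close> is a tree automorphism, every \<open>\<psi>\<^sub>i\<close> is harmonic.
  Elements \<open>e\<close> of the finite index subgroup \<open>E = \<Gamma> \<inter> g \<Gamma> g\<^sup>-\<^sup>1\<close> satisfy \<open>p e = a p\<close> with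
  \<open>a \<in> \<Gamma>\<close>, so \<open>\<psi>\<^sub>i (e v) = \<psi>\<^sub>i v + \<theta>\<^sub>i e\<close>; the homomorphism \<open>\<theta>\<^sub>i\<close> kills \<open>E \<inter> K\<^sub>d\<close>
  because \<open>g\<close> also commensurates \<open>K\<^sub>d\<close>, hence depends only on the abelianization of \<open>e\<close>.
  Therefore, for fixed \<open>x\<close>, the harmonic function \<open>v \<mapsto> \<psi>\<^sub>i (x v) - \<psi>\<^sub>i v\<close> is determined
  by the cosets \<open>E v\<close> and \<open>E x v\<close>; it takes finitely many values and is constant by the
  maximum principle, i.e.\ \<open>p\<close> induces an affine map on \<open>\<int>\<^sup>d\<close>. Such an automorphism is
  determined by its values at one vertex and its neighbours, because the label of every edge
  of the image is read off from exponent sums. So \<open>g\<close> is determined by its values on the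
  ball of radius one around the identity.
\<close>

definition letter_inv :: "letter \<Rightarrow> letter" where
  "letter_inv x = (fst x, \<not> snd x)"

definition word_inv :: "letter list \<Rightarrow> letter list" where
  "word_inv u = rev (map letter_inv u)"

lemma letter_inv_letter_inv [simp]: "letter_inv (letter_inv x) = x"
  by (simp add: letter_inv_def)

lemma eq_letter_inv_iff: "y = letter_inv x \<longleftrightarrow> fst x = fst y \<and> snd x \<noteq> snd y"
  by (cases x; cases y) (auto simp: letter_inv_def)

lemma reduced_Cons_Cons [simp]:
  "reduced (x # y # ys) \<longleftrightarrow> y \<noteq> letter_inv x \<and> reduced (y # ys)"
  by (simp add: eq_letter_inv_iff)

lemma cons_red_Cons [simp]:
  "cons_red x (y # ys) = (if y = letter_inv x then ys else x # y # ys)"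
  by (simp add: eq_letter_inv_iff)

declare reduced.simps(3) [simp del] cons_red.simps(2) [simp del]

lemma reduced_ConsD: "reduced (x # xs) \<Longrightarrow> reduced xs"
  by (cases xs) auto

lemma reduced_cons_red: "reduced w \<Longrightarrow> reduced (cons_red x w)"
  by (cases w) (auto dest: reduced_ConsD)

lemma mult_red_Nil [simp]: "mult_red [] v = v"
  by (simp add: mult_red_def)

lemma mult_red_Cons [simp]: "mult_red (x # u) v = cons_red x (mult_red u v)"
  by (simp add: mult_red_def)

lemma mult_red_append: "mult_red (u @ u') v = mult_red u (mult_red u' v)"
  by (simp add: mult_red_def)

lemma reduced_mult_red: "reduced v \<Longrightarrow> reduced (mult_red u v)"
  by (induct u) (auto intro: reduced_cons_red)

lemma set_mult_red_subset: "set (mult_red u v) \<subseteq> set u \<union> set v"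
proof (induct u)
  case (Cons x u)
  have "set (cons_red x w) \<subseteq> insert x (set w)" for w
    by (cases w) auto
  with Cons show ?case by fastforce
qed simp

lemma FG_reduced: "u \<in> FG d \<Longrightarrow> reduced u"
  by (simp add: FG_def)

lemma Nil_in_FG [simp]: "[] \<in> FG d"
  by (simp add: FG_def)

lemma mult_red_in_FG: "u \<in> FG d \<Longrightarrow> v \<in> FG d \<Longrightarrow> mult_red u v \<in> FG d"
  unfolding FG_def using set_mult_red_subset reduced_mult_red by blast

lemma cons_red_cons_red_letter_inv:
  assumes "reduced w"
  shows "cons_red x (cons_red (letter_inv x) w) = w"
proof (cases w)
  case (Cons y ys)
  with assms show ?thesis
    by (cases ys) (auto simp: eq_letter_inv_iff)
qed simp

lemma mult_red_cons_red:
  assumes "reduced v"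
  shows "mult_red (cons_red x r) v = cons_red x (mult_red r v)"
proof (cases r)
  case (Cons y rs)
  have "reduced (mult_red rs v)"
    using assms by (rule reduced_mult_red)
  with Cons show ?thesis
    using cons_red_cons_red_letter_inv by auto
qed simp

lemma mult_red_assoc:
  "reduced v \<Longrightarrow> mult_red (mult_red u w) v = mult_red u (mult_red w v)"
  by (induct u) (simp_all add: mult_red_cons_red)

lemma cons_red_reduced: "reduced (x # u) \<Longrightarrow> cons_red x u = x # u"
  by (cases u) auto

lemma mult_red_Nil_right: "reduced u \<Longrightarrow> mult_red u [] = u"
proof (induct u)
  case (Cons x u)
  then show ?case
    by (metis reduced_ConsD cons_red_reduced mult_red_Cons)
qed simp

lemma reduced_snoc:
  "reduced (xs @ [y]) \<longleftrightarrow> reduced xs \<and> (xs \<noteq> [] \<longrightarrow> y \<noteq> letter_inv (last xs))"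
  by (induct xs rule: reduced.induct) auto

lemma word_inv_Cons: "word_inv (x # u) = word_inv u @ [letter_inv x]"
  by (simp add: word_inv_def)

lemma word_inv_eq_Nil_iff [simp]: "word_inv u = [] \<longleftrightarrow> u = []"
  by (simp add: word_inv_def)

lemma last_word_inv: "u \<noteq> [] \<Longrightarrow> last (word_inv u) = letter_inv (hd u)"
  by (cases u) (simp_all add: word_inv_def)

lemma reduced_word_inv: "reduced u \<Longrightarrow> reduced (word_inv u)"
proof (induct u)
  case (Cons x u)
  then have "reduced (word_inv u)"
    by (blast dest: reduced_ConsD)
  moreover have "u \<noteq> [] \<Longrightarrow> hd u \<noteq> letter_inv x"
    using Cons.prems by (cases u) auto
  ultimately show ?case
    by (auto simp: word_inv_Cons reduced_snoc last_word_inv)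
qed (simp add: word_inv_def)

lemma word_inv_word_inv [simp]: "word_inv (word_inv u) = u"
  by (simp add: word_inv_def rev_map comp_def)

lemma mult_red_word_inv_left [simp]: "mult_red (word_inv u) u = []"
  by (induct u) (simp_all add: word_inv_def mult_red_append)

lemma mult_red_word_inv_right [simp]: "mult_red u (word_inv u) = []"
  using mult_red_word_inv_left [of "word_inv u"] by simp

lemma word_inv_in_FG: "u \<in> FG d \<Longrightarrow> word_inv u \<in> FG d"
  using reduced_word_inv [of u] by (auto simp: FG_def word_inv_def letter_inv_def)

lemma mult_red_word_inv_cancel_left:
  "reduced a \<Longrightarrow> mult_red (word_inv v) (mult_red v a) = a"
  by (simp flip: mult_red_assoc)

lemma mult_red_word_inv_cancel_right:
  "reduced a \<Longrightarrow> reduced v \<Longrightarrow> mult_red (mult_red a v) (word_inv v) = a"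
  by (simp add: mult_red_assoc reduced_word_inv mult_red_Nil_right)

lemma mult_red_left_cancel:
  "reduced a \<Longrightarrow> reduced b \<Longrightarrow> mult_red v a = mult_red v b \<longleftrightarrow> a = b"
  using mult_red_word_inv_cancel_left by metis

lemma mult_red_right_cancel:
  "reduced a \<Longrightarrow> reduced b \<Longrightarrow> reduced v \<Longrightarrow> mult_red a v = mult_red b v \<longleftrightarrow> a = b"
  using mult_red_word_inv_cancel_right by metis

definition word_pow :: "letter list \<Rightarrow> nat \<Rightarrow> letter list" where
  "word_pow k n = (mult_red k ^^ n) []"

lemma word_pow_0 [simp]: "word_pow k 0 = []"
  by (simp add: word_pow_def)

lemma word_pow_Suc: "word_pow k (Suc n) = mult_red k (word_pow k n)"
  by (simp add: word_pow_def)

lemma reduced_word_pow: "reduced (word_pow k n)"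
  by (induct n) (simp_all add: word_pow_Suc reduced_mult_red)

lemma word_pow_in_FG: "k \<in> FG d \<Longrightarrow> word_pow k n \<in> FG d"
  by (induct n) (simp_all add: word_pow_Suc mult_red_in_FG)

lemma word_pow_add: "word_pow k (m + n) = mult_red (word_pow k m) (word_pow k n)"
  by (induct m) (simp_all add: word_pow_Suc mult_red_assoc reduced_word_pow)

lemma expsum_Nil [simp]: "expsum i [] = 0"
  by (simp add: expsum_def)

lemma expsum_cons_red: "expsum i (cons_red x w) = expsum i [x] + expsum i w"
  by (cases w) (auto simp: expsum_def letter_inv_def)

lemma expsum_mult_red [simp]: "expsum i (mult_red u v) = expsum i u + expsum i v"
  by (induct u) (simp_all add: expsum_cons_red, simp add: expsum_def)

lemma expsum_word_inv [simp]: "expsum i (word_inv u) = - expsum i u"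
  by (induct u) (simp_all add: word_inv_def expsum_def letter_inv_def)

lemma expsum_word_pow: "expsum i (word_pow k n) = int n * expsum i k"
  by (induct n) (simp_all add: word_pow_Suc algebra_simps)

definition ab_kernel :: "nat \<Rightarrow> letter list set" where
  "ab_kernel d = {w \<in> FG d. \<forall>i<d. expsum i w = 0}"

lemma Kd_eq: "Kd d = lmul d ` ab_kernel d"
  by (simp add: Kd_def ab_kernel_def)

lemma ab_kernel_subset_FG: "ab_kernel d \<subseteq> FG d"
  by (auto simp: ab_kernel_def)

lemma Nil_in_ab_kernel [simp]: "[] \<in> ab_kernel d"
  by (simp add: ab_kernel_def)

lemma word_pow_in_ab_kernel: "k \<in> ab_kernel d \<Longrightarrow> word_pow k n \<in> ab_kernel d"
  by (simp add: ab_kernel_def word_pow_in_FG expsum_word_pow)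

definition letters :: "nat \<Rightarrow> letter set" where
  "letters d = {x. fst x < d}"

lemma letters_eq: "letters d = {..<d} \<times> UNIV"
  by (auto simp: letters_def)

lemma finite_letters: "finite (letters d)"
  by (simp add: letters_eq)

lemma singleton_in_FG: "l \<in> letters d \<Longrightarrow> [l] \<in> FG d"
  by (simp add: FG_def letters_def)

lemma Cons_in_FG_iff:
  "l # u \<in> FG d \<longleftrightarrow> l \<in> letters d \<and> u \<in> FG d \<and> (u \<noteq> [] \<longrightarrow> hd u \<noteq> letter_inv l)"
  by (cases u) (auto simp: FG_def letters_def)

lemma sum_expsum_letters: "(\<Sum>l\<in>letters d. expsum i [l]) = 0"
proof -
  have "(\<Sum>l\<in>letters d. expsum i [l]) = (\<Sum>j<d. \<Sum>b\<in>UNIV. expsum i [(j, b)])"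
    by (simp add: letters_eq sum.cartesian_product)
  also have "\<dots> = 0"
  proof (rule sum.neutral, rule ballI)
    fix j
    show "(\<Sum>b\<in>UNIV. expsum i [(j, b)]) = 0"
      by (cases "j = i") (simp_all add: UNIV_bool expsum_def)
  qed
  finally show ?thesis .
qed

lemma letter_eqI:
  assumes "l \<in> letters d" and "\<forall>i<d. expsum i [l] = expsum i [m]"
  shows "l = m"
proof -
  have "fst l < d"
    using assms(1) by (simp add: letters_def)
  with assms(2) have "expsum (fst l) [l] = expsum (fst l) [m]"
    by blast
  then show ?thesis
    by (cases l; cases m) (auto simp: expsum_def split: if_splits)
qed

definition tree_nbrs :: "nat \<Rightarrow> letter list \<Rightarrow> letter list set" where
  "tree_nbrs d v = {u \<in> FG d. tree_adj d v u}"

lemma tree_adj_mult_red_letter: "l \<in> letters d \<Longrightarrow> tree_adj d v (mult_red v [l])"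
  by (cases l) (auto simp: tree_adj_def letters_def)

lemma bij_betw_letters_tree_nbrs:
  assumes "v \<in> FG d"
  shows "bij_betw (\<lambda>l. mult_red v [l]) (letters d) (tree_nbrs d v)"
proof (rule bij_betw_imageI)
  show "inj_on (\<lambda>l. mult_red v [l]) (letters d)"
    by (rule inj_onI) (simp add: mult_red_left_cancel)
  show "(\<lambda>l. mult_red v [l]) ` letters d = tree_nbrs d v"
  proof
    show "(\<lambda>l. mult_red v [l]) ` letters d \<subseteq> tree_nbrs d v"
      using assms by (auto simp: tree_nbrs_def
          intro: mult_red_in_FG singleton_in_FG tree_adj_mult_red_letter)
    show "tree_nbrs d v \<subseteq> (\<lambda>l. mult_red v [l]) ` letters d"
      by (force simp: tree_nbrs_def tree_adj_def letters_def)
  qed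
qed

lemma finite_tree_nbrs: "v \<in> FG d \<Longrightarrow> finite (tree_nbrs d v)"
  using bij_betw_finite [OF bij_betw_letters_tree_nbrs] finite_letters by blast

lemma FG_induct_from:
  assumes "x \<in> FG d" and "v0 \<in> FG d" "P v0"
    and step: "\<And>v l. v \<in> FG d \<Longrightarrow> P v \<Longrightarrow> l \<in> letters d \<Longrightarrow> P (mult_red v [l])"
  shows "P x"
proof -
  have "P (mult_red v u)" if "u \<in> FG d" "v \<in> FG d" "P v" for u v
    using that
  proof (induct u arbitrary: v)
    case Nil
    then show ?case
      by (simp add: mult_red_Nil_right FG_reduced)
  next
    case (Cons l u)
    then have l: "l \<in> letters d" and u: "u \<in> FG d"
      by (simp_all add: Cons_in_FG_iff)
    have "mult_red v (l # u) = mult_red v (mult_red [l] u)"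
      using Cons.prems(1) by (simp add: cons_red_reduced FG_reduced)
    also have "\<dots> = mult_red (mult_red v [l]) u"
      using u by (simp add: mult_red_assoc FG_reduced)
    finally show ?case
      using Cons.hyps [OF u] Cons.prems(2,3) l step
      by (simp add: mult_red_in_FG singleton_in_FG)
  qed
  moreover have "x = mult_red v0 (mult_red (word_inv v0) x)"
    using assms(1) by (simp flip: mult_red_assoc add: FG_reduced)
  ultimately show ?thesis
    using assms by (metis mult_red_in_FG word_inv_in_FG)
qed

section \<open>Harmonic functions on the tree\<close>

definition harmonic :: "nat \<Rightarrow> (letter list \<Rightarrow> int) \<Rightarrow> bool" where
  "harmonic d f \<longleftrightarrow> (\<forall>v\<in>FG d. (\<Sum>l\<in>letters d. f (mult_red v [l]) - f v) = 0)"

lemma harmonic_diff: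
  assumes "harmonic d f" and "harmonic d g"
  shows "harmonic d (\<lambda>v. f v - g v)"
  unfolding harmonic_def
proof
  fix v assume "v \<in> FG d"
  have "(\<Sum>l\<in>letters d. (f (mult_red v [l]) - g (mult_red v [l])) - (f v - g v))
      = (\<Sum>l\<in>letters d. (f (mult_red v [l]) - f v) - (g (mult_red v [l]) - g v))"
    by (simp add: algebra_simps)
  also have "\<dots> = 0"
    using assms \<open>v \<in> FG d\<close> unfolding harmonic_def by (simp add: sum_subtractf)
  finally show "(\<Sum>l\<in>letters d. (f (mult_red v [l]) - g (mult_red v [l])) - (f v - g v)) = 0" .
qed

lemma harmonic_left_translate:
  assumes "harmonic d f" and "x \<in> FG d"
  shows "harmonic d (\<lambda>v. f (mult_red x v))"
  unfolding harmonic_def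
proof
  fix v assume "v \<in> FG d"
  have "mult_red x (mult_red v [l]) = mult_red (mult_red x v) [l]" for l
    by (simp add: mult_red_assoc)
  then show "(\<Sum>l\<in>letters d. f (mult_red x (mult_red v [l])) - f (mult_red x v)) = 0"
    using assms \<open>v \<in> FG d\<close> by (simp add: harmonic_def mult_red_in_FG)
qed

text \<open>Maximum principle: at a maximum of a harmonic function all neighbours take the maximal
  value too, so by connectedness the maximum spreads over the whole tree.\<close>

lemma harmonic_finite_range_imp_constant:
  assumes harm: "harmonic d f" and fin: "finite (f ` FG d)" and v: "v \<in> FG d"
  shows "f v = f []"
proof -
  define M where "M = Max (f ` FG d)"
  have le_M: "f u \<le> M" if "u \<in> FG d" for u
    unfolding M_def using fin that by simp
  obtain v0 where v0: "v0 \<in> FG d" "f v0 = M"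
    unfolding M_def using Max_in [OF fin] by (metis Nil_in_FG empty_iff imageE image_eqI)
  have step: "f (mult_red u [l]) = M" if u: "u \<in> FG d" "f u = M" and l: "l \<in> letters d" for u l
  proof -
    have "(\<Sum>l\<in>letters d. f u - f (mult_red u [l])) = 0"
      using harm u(1) by (simp add: harmonic_def sum_subtractf)
    moreover have "\<forall>l\<in>letters d. 0 \<le> f u - f (mult_red u [l])"
      using u le_M by (simp add: mult_red_in_FG singleton_in_FG)
    ultimately have "\<forall>l\<in>letters d. f u - f (mult_red u [l]) = 0"
      by (simp add: sum_nonneg_eq_0_iff finite_letters)
    with u l show ?thesis
      by simp
  qed
  have "f u = M" if "u \<in> FG d" for u
    using FG_induct_from [where P = "\<lambda>u. f u = M"] that v0 step by blast
  with v show ?thesis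
    by simp
qed

lemma carrier_AutT:
  "carrier (AutT d) =
     {f \<in> Bij (FG d). \<forall>u\<in>FG d. \<forall>v\<in>FG d. tree_adj d u v \<longleftrightarrow> tree_adj d (f u) (f v)}"
  by (simp add: AutT_def)

lemma AutT_Bij: "f \<in> carrier (AutT d) \<Longrightarrow> f \<in> Bij (FG d)"
  by (simp add: carrier_AutT)

lemma AutT_in_FG: "f \<in> carrier (AutT d) \<Longrightarrow> x \<in> FG d \<Longrightarrow> f x \<in> FG d"
  using AutT_Bij Bij_imp_funcset by blast

lemma tree_adj_AutT_iff:
  "f \<in> carrier (AutT d) \<Longrightarrow> u \<in> FG d \<Longrightarrow> v \<in> FG d \<Longrightarrow>
     tree_adj d (f u) (f v) \<longleftrightarrow> tree_adj d u v"
  by (simp add: carrier_AutT)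

lemma mult_AutT:
  "f \<in> Bij (FG d) \<Longrightarrow> g \<in> Bij (FG d) \<Longrightarrow> f \<otimes>\<^bsub>AutT d\<^esub> g = compose (FG d) f g"
  by (simp add: AutT_def BijGroup_def)

lemma subgroup_AutT: "subgroup (carrier (AutT d)) (BijGroup (FG d))"
proof (rule subgroup.intro)
  show "carrier (AutT d) \<subseteq> carrier (BijGroup (FG d))"
    by (auto simp: carrier_AutT BijGroup_def)
  show "\<one>\<^bsub>BijGroup (FG d)\<^esub> \<in> carrier (AutT d)"
    by (auto simp: carrier_AutT BijGroup_def id_Bij)
next
  fix f g assume f: "f \<in> carrier (AutT d)" and g: "g \<in> carrier (AutT d)"
  have "tree_adj d u v \<longleftrightarrow> tree_adj d (compose (FG d) f g u) (compose (FG d) f g v)"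
    if "u \<in> FG d" "v \<in> FG d" for u v
    using that f g by (simp add: compose_def tree_adj_AutT_iff AutT_in_FG)
  then have "compose (FG d) f g \<in> carrier (AutT d)"
    using f g by (simp add: carrier_AutT compose_Bij)
  then show "f \<otimes>\<^bsub>BijGroup (FG d)\<^esub> g \<in> carrier (AutT d)"
    using f g by (simp add: BijGroup_def AutT_Bij)
next
  fix f assume f: "f \<in> carrier (AutT d)"
  then have bij: "bij_betw f (FG d) (FG d)" and Bij: "f \<in> Bij (FG d)"
    by (simp_all add: carrier_AutT Bij_def)
  have "tree_adj d u v \<longleftrightarrow> tree_adj d (inv_into (FG d) f u) (inv_into (FG d) f v)"
    if "u \<in> FG d" "v \<in> FG d" for u v
    using tree_adj_AutT_iff [OF f Bij_inv_into_mem [OF Bij that(1)] Bij_inv_into_mem [OF Bij that(2)]]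
      bij_betw_inv_into_right [OF bij that(1)] bij_betw_inv_into_right [OF bij that(2)]
    by simp
  then have "(\<lambda>x\<in>FG d. inv_into (FG d) f x) \<in> carrier (AutT d)"
    using Bij by (simp add: carrier_AutT restrict_inv_into_Bij Bij_inv_into_mem)
  then show "inv\<^bsub>BijGroup (FG d)\<^esub> f \<in> carrier (AutT d)"
    using Bij by (simp add: inv_BijGroup)
qed

lemma group_AutT: "group (AutT d)"
  unfolding AutT_def by (rule subgroup.subgroup_is_group [OF _ group_BijGroup])
    (use subgroup_AutT in \<open>simp add: AutT_def\<close>)

lemma inv_AutT:
  "f \<in> carrier (AutT d) \<Longrightarrow> inv\<^bsub>AutT d\<^esub> f = (\<lambda>x\<in>FG d. inv_into (FG d) f x)"
  using group.m_inv_consistent [OF group_BijGroup subgroup_AutT]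
  by (simp add: AutT_def inv_BijGroup carrier_AutT)

lemma AutT_inv_apply_left [simp]:
  "f \<in> carrier (AutT d) \<Longrightarrow> x \<in> FG d \<Longrightarrow> (inv\<^bsub>AutT d\<^esub> f) (f x) = x"
  using AutT_Bij [of f d] AutT_in_FG [of f d x]
  by (simp add: inv_AutT Bij_def bij_betw_def inv_into_f_f)

lemma AutT_apply_inv [simp]:
  "f \<in> carrier (AutT d) \<Longrightarrow> x \<in> FG d \<Longrightarrow> f ((inv\<^bsub>AutT d\<^esub> f) x) = x"
  using AutT_Bij [of f d] bij_betw_inv_into_right [of f "FG d" "FG d" x]
  by (simp add: inv_AutT Bij_def)

lemma bij_betw_AutT_tree_nbrs:
  assumes f: "f \<in> carrier (AutT d)" and v: "v \<in> FG d"
  shows "bij_betw f (tree_nbrs d v) (tree_nbrs d (f v))"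
proof (rule bij_betw_imageI)
  have bij: "bij_betw f (FG d) (FG d)"
    using AutT_Bij [OF f] by (simp add: Bij_def)
  then show "inj_on f (tree_nbrs d v)"
    by (auto simp: tree_nbrs_def bij_betw_def inj_on_def)
  show "f ` tree_nbrs d v = tree_nbrs d (f v)"
  proof
    show "f ` tree_nbrs d v \<subseteq> tree_nbrs d (f v)"
      using f v by (auto simp: tree_nbrs_def tree_adj_AutT_iff AutT_in_FG)
    show "tree_nbrs d (f v) \<subseteq> f ` tree_nbrs d v"
    proof
      fix u assume u: "u \<in> tree_nbrs d (f v)"
      define u' where "u' = (inv\<^bsub>AutT d\<^esub> f) u"
      have u': "u' \<in> FG d" "f u' = u"
        using f u by (simp_all add: u'_def tree_nbrs_def AutT_in_FG group.inv_closed [OF group_AutT])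
      then have "u' \<in> tree_nbrs d v"
        using u tree_adj_AutT_iff [OF f v u'(1)] by (simp add: tree_nbrs_def)
      with u' show "u \<in> f ` tree_nbrs d v"
        by blast
    qed
  qed
qed

lemma sum_letters_AutT:
  assumes f: "f \<in> carrier (AutT d)" and v: "v \<in> FG d"
  shows "(\<Sum>l\<in>letters d. h (f (mult_red v [l]))) = (\<Sum>l\<in>letters d. h (mult_red (f v) [l]))"
proof -
  have "(\<Sum>l\<in>letters d. h (f (mult_red v [l]))) = (\<Sum>u\<in>tree_nbrs d v. h (f u))"
    using sum.reindex_bij_betw [OF bij_betw_letters_tree_nbrs [OF v]] by simp
  also have "\<dots> = (\<Sum>u\<in>tree_nbrs d (f v). h u)"
    using sum.reindex_bij_betw [OF bij_betw_AutT_tree_nbrs [OF f v]] by simp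
  also have "\<dots> = (\<Sum>l\<in>letters d. h (mult_red (f v) [l]))"
    using sum.reindex_bij_betw [OF bij_betw_letters_tree_nbrs [OF AutT_in_FG [OF f v]], of h]
    by simp
  finally show ?thesis .
qed

lemma harmonic_expsum_AutT:
  assumes f: "f \<in> carrier (AutT d)"
  shows "harmonic d (\<lambda>v. expsum i (f v))"
  unfolding harmonic_def
proof
  fix v assume v: "v \<in> FG d"
  have "(\<Sum>l\<in>letters d. expsum i (f (mult_red v [l])) - expsum i (f v))
      = (\<Sum>l\<in>letters d. expsum i (mult_red (f v) [l]) - expsum i (f v))"
    using sum_letters_AutT [OF f v, of "\<lambda>u. expsum i u - expsum i (f v)"] by simp
  also have "\<dots> = 0"
    by (simp add: sum_expsum_letters)
  finally show "(\<Sum>l\<in>letters d. expsum i (f (mult_red v [l])) - expsum i (f v)) = 0" .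
qed

section \<open>Exponent sums along an automorphism\<close>

text \<open>For left multiplications, \<open>conj_into d p A\<close> is \<open>A \<inter> p\<^sup>-\<^sup>1 A p\<close>: the \<open>e \<in> A\<close> that
  \<open>p\<close> conjugates into left multiplication by some \<open>a \<in> A\<close>.\<close>

definition conj_into ::
    "nat \<Rightarrow> (letter list \<Rightarrow> letter list) \<Rightarrow> letter list set \<Rightarrow> letter list set" where
  "conj_into d p A = {e \<in> A. \<exists>a\<in>A. \<forall>v\<in>FG d. p (mult_red e v) = mult_red a (p v)}"

definition right_translates :: "letter list set \<Rightarrow> letter list set \<Rightarrow> letter list set set" where
  "right_translates E A = {(\<lambda>e. mult_red e y) ` E | y. y \<in> A}"

definition expsum_shift :: "(letter list \<Rightarrow> letter list) \<Rightarrow> nat \<Rightarrow> letter list \<Rightarrow> int" where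
  "expsum_shift p i e = expsum i (p e) - expsum i (p [])"

definition ab_affine :: "nat \<Rightarrow> (letter list \<Rightarrow> letter list) \<Rightarrow> bool" where
  "ab_affine d p \<longleftrightarrow> (\<forall>x\<in>FG d. \<forall>v\<in>FG d. \<forall>i<d.
     expsum i (p (mult_red x v)) = expsum i (p v) + expsum i (p x) - expsum i (p []))"

lemma Nil_in_conj_into: "[] \<in> A \<Longrightarrow> [] \<in> conj_into d p A"
  unfolding conj_into_def by (auto intro!: bexI [of _ "[]"])

lemma conj_into_FG_mult_red:
  assumes p: "p \<in> carrier (AutT d)"
    and e1: "e1 \<in> conj_into d p (FG d)" and e2: "e2 \<in> conj_into d p (FG d)"
  shows "mult_red e1 e2 \<in> conj_into d p (FG d)"
proof -
  obtain a1 where a1: "a1 \<in> FG d" "\<forall>v\<in>FG d. p (mult_red e1 v) = mult_red a1 (p v)"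
    using e1 by (auto simp: conj_into_def)
  obtain a2 where a2: "a2 \<in> FG d" "\<forall>v\<in>FG d. p (mult_red e2 v) = mult_red a2 (p v)"
    using e2 by (auto simp: conj_into_def)
  have "p (mult_red (mult_red e1 e2) v) = mult_red (mult_red a1 a2) (p v)" if v: "v \<in> FG d" for v
  proof -
    have "p (mult_red (mult_red e1 e2) v) = p (mult_red e1 (mult_red e2 v))"
      using v by (simp add: mult_red_assoc FG_reduced)
    also have "\<dots> = mult_red a1 (mult_red a2 (p v))"
      using a1 a2 e2 v by (simp add: conj_into_def mult_red_in_FG)
    also have "\<dots> = mult_red (mult_red a1 a2) (p v)"
      using FG_reduced [OF AutT_in_FG [OF p v]] by (simp add: mult_red_assoc)
    finally show ?thesis .
  qed
  with e1 e2 a1(1) a2(1) show ?thesis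
    by (auto simp: conj_into_def mult_red_in_FG)
qed

lemma conj_into_FG_word_inv:
  assumes p: "p \<in> carrier (AutT d)" and e: "e \<in> conj_into d p (FG d)"
  shows "word_inv e \<in> conj_into d p (FG d)"
proof -
  obtain a where a: "a \<in> FG d" "\<forall>v\<in>FG d. p (mult_red e v) = mult_red a (p v)"
    using e by (auto simp: conj_into_def)
  have eF: "e \<in> FG d"
    using e by (simp add: conj_into_def)
  have "p (mult_red (word_inv e) v) = mult_red (word_inv a) (p v)" if v: "v \<in> FG d" for v
  proof -
    let ?u = "mult_red (word_inv e) v"
    have u: "?u \<in> FG d"
      using eF v by (simp add: mult_red_in_FG word_inv_in_FG)
    have "mult_red e ?u = v"
      using v by (simp flip: mult_red_assoc add: FG_reduced)
    then have "p v = mult_red a (p ?u)"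
      using a(2) u by metis
    moreover have "reduced (p ?u)"
      by (rule FG_reduced [OF AutT_in_FG [OF p u]])
    ultimately show ?thesis
      by (simp add: mult_red_word_inv_cancel_left)
  qed
  with eF a(1) show ?thesis
    by (auto simp: conj_into_def word_inv_in_FG)
qed

lemma expsum_conj_into:
  assumes e: "e \<in> conj_into d p (FG d)" and v: "v \<in> FG d"
  shows "expsum i (p (mult_red e v)) = expsum i (p v) + expsum_shift p i e"
proof -
  obtain a where a: "\<forall>v\<in>FG d. p (mult_red e v) = mult_red a (p v)"
    using e by (auto simp: conj_into_def)
  moreover have "e \<in> FG d"
    using e by (simp add: conj_into_def)
  then have "p e = p (mult_red e [])"
    by (simp add: mult_red_Nil_right FG_reduced)
  ultimately show ?thesis
    using v by (simp add: expsum_shift_def)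
qed

lemma expsum_conj_into_word_pow:
  assumes "k \<in> conj_into d p (FG d)"
  shows "expsum i (p (word_pow k n)) = expsum i (p []) + int n * expsum_shift p i k"
proof (induct n)
  case (Suc n)
  have "word_pow k n \<in> FG d"
    using assms by (simp add: conj_into_def word_pow_in_FG)
  with Suc assms show ?case
    by (simp add: word_pow_Suc expsum_conj_into algebra_simps)
qed simp

lemma expsum_conj_into_ab_kernel:
  assumes "e \<in> conj_into d p (ab_kernel d)" and "v \<in> FG d" and "i < d"
  shows "expsum i (p (mult_red e v)) = expsum i (p v)"
  using assms by (auto simp: conj_into_def ab_kernel_def)

lemma finite_image_if_factors:
  assumes "finite (lab ` A)" and "\<And>x y. x \<in> A \<Longrightarrow> y \<in> A \<Longrightarrow> lab x = lab y \<Longrightarrow> F x = F y"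
  shows "finite (F ` A)"
proof -
  have "F ` A \<subseteq> (\<lambda>q. F (inv_into A lab q)) ` lab ` A"
  proof
    fix z assume "z \<in> F ` A"
    then obtain x where x: "x \<in> A" "z = F x"
      by blast
    then have "lab x \<in> lab ` A"
      by blast
    then have "F (inv_into A lab (lab x)) = F x"
      using assms(2) [OF inv_into_into x(1)] f_inv_into_f by metis
    with x show "z \<in> (\<lambda>q. F (inv_into A lab q)) ` lab ` A"
      by (metis image_eqI)
  qed
  with assms(1) show ?thesis
    by (meson finite_imageI finite_subset)
qed

locale commensurating_aut =
  fixes d :: nat and p :: "letter list \<Rightarrow> letter list"
  assumes aut: "p \<in> carrier (AutT d)"
    and finite_translates: "finite (right_translates (conj_into d p (FG d)) (FG d))"
    and finite_translates_ab_kernel: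
      "finite (right_translates (conj_into d p (ab_kernel d)) (ab_kernel d))"
begin

text \<open>Some power \<open>k\<^sup>n\<close>, \<open>n > 0\<close>, lies in \<open>conj_into d p (ab_kernel d)\<close>, which does not move
  exponent sums; but moving by \<open>k\<^sup>n\<close> shifts them by \<open>n\<close> times the shift of \<open>k\<close>.\<close>

lemma expsum_shift_ab_kernel:
  assumes k: "k \<in> conj_into d p (FG d)" "k \<in> ab_kernel d" and i: "i < d"
  shows "expsum_shift p i k = 0"
proof -
  let ?EK = "conj_into d p (ab_kernel d)"
  define T where "T n = (\<lambda>e. mult_red e (word_pow k n)) ` ?EK" for n
  have "range T \<subseteq> right_translates ?EK (ab_kernel d)"
    using k(2) by (auto simp: T_def right_translates_def word_pow_in_ab_kernel)
  then have "\<not> inj T"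
    using finite_translates_ab_kernel finite_subset finite_imageD infinite_UNIV_nat by blast
  then obtain m n where mn: "m < n" "T m = T n"
    by (metis injI linorder_neqE_nat)
  have "word_pow k n \<in> T n"
    unfolding T_def by (rule image_eqI [of _ _ "[]"]) (simp_all add: Nil_in_conj_into)
  then obtain e where e: "e \<in> ?EK" "word_pow k n = mult_red e (word_pow k m)"
    using mn(2) by (auto simp: T_def)
  have "word_pow k n = mult_red (word_pow k (n - m)) (word_pow k m)"
    using mn(1) by (simp flip: word_pow_add)
  with e have "e = word_pow k (n - m)"
    using ab_kernel_subset_FG conj_into_def
    by (force simp: mult_red_right_cancel reduced_word_pow FG_reduced)
  then have "expsum i (p (word_pow k (n - m))) = expsum i (p [])"
    using expsum_conj_into_ab_kernel [OF e(1) Nil_in_FG i]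
    by (simp add: mult_red_Nil_right reduced_word_pow)
  then have "int (n - m) * expsum_shift p i k = 0"
    using expsum_conj_into_word_pow [OF k(1)] by simp
  with mn(1) show ?thesis
    by simp
qed

lemma expsum_shift_eq:
  assumes e1: "e1 \<in> conj_into d p (FG d)" and e2: "e2 \<in> conj_into d p (FG d)"
    and same: "\<forall>j<d. expsum j e1 = expsum j e2" and i: "i < d"
  shows "expsum_shift p i e1 = expsum_shift p i e2"
proof -
  let ?k = "mult_red e1 (word_inv e2)"
  have k: "?k \<in> conj_into d p (FG d)"
    using aut e1 e2 by (simp add: conj_into_FG_mult_red conj_into_FG_word_inv)
  have "?k \<in> ab_kernel d"
    using k same by (simp add: ab_kernel_def conj_into_def)
  have "e1 \<in> FG d" "e2 \<in> FG d"
    using e1 e2 by (simp_all add: conj_into_def)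
  then have "mult_red ?k e2 = e1"
    by (simp add: mult_red_assoc mult_red_Nil_right FG_reduced)
  then have "expsum i (p e1) = expsum i (p e2) + expsum_shift p i ?k"
    using expsum_conj_into [OF k, of e2] e2 by (simp add: conj_into_def)
  with expsum_shift_ab_kernel [OF k \<open>?k \<in> ab_kernel d\<close> i] show ?thesis
    by (simp add: expsum_shift_def)
qed

text \<open>The increment \<open>v \<mapsto> \<psi>(g v) - \<psi>(v)\<close> of \<open>\<psi> = expsum i \<circ> p\<close> is determined by the
  translates \<open>E v\<close> and \<open>E g v\<close>, of which there are finitely many.\<close>

lemma finite_range_expsum_increment:
  assumes g: "g \<in> FG d" and i: "i < d"
  shows "finite ((\<lambda>v. expsum i (p (mult_red g v)) - expsum i (p v)) ` FG d)"
proof (rule finite_image_if_factors)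
  let ?E = "conj_into d p (FG d)"
  let ?lab = "\<lambda>v. ((\<lambda>e. mult_red e v) ` ?E, (\<lambda>e. mult_red e (mult_red g v)) ` ?E)"
  have "?lab ` FG d \<subseteq> right_translates ?E (FG d) \<times> right_translates ?E (FG d)"
    using g by (auto simp: right_translates_def mult_red_in_FG)
  then show "finite (?lab ` FG d)"
    using finite_translates by (meson finite_SigmaI finite_subset)
next
  let ?E = "conj_into d p (FG d)"
  fix v v' assume v: "v \<in> FG d" and v': "v' \<in> FG d"
    and lab: "((\<lambda>e. mult_red e v) ` ?E, (\<lambda>e. mult_red e (mult_red g v)) ` ?E) =
              ((\<lambda>e. mult_red e v') ` ?E, (\<lambda>e. mult_red e (mult_red g v')) ` ?E)"
  have Nil: "[] \<in> ?E"
    by (simp add: Nil_in_conj_into)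
  have "v' \<in> (\<lambda>e. mult_red e v) ` ?E"
    using lab Nil by (metis (no_types, lifting) image_eqI mult_red_Nil prod.inject)
  then obtain e where e: "e \<in> ?E" "v' = mult_red e v"
    by blast
  have "mult_red g v' \<in> (\<lambda>e. mult_red e (mult_red g v)) ` ?E"
    using lab Nil by (metis (no_types, lifting) image_eqI mult_red_Nil prod.inject)
  then obtain e' where e': "e' \<in> ?E" "mult_red g v' = mult_red e' (mult_red g v)"
    by blast
  have "\<forall>j<d. expsum j e = expsum j e'"
    using arg_cong [OF e'(2), of "expsum _"] e(2) by simp
  then have "expsum_shift p i e = expsum_shift p i e'"
    using expsum_shift_eq [OF e(1) e'(1) _ i] by blast
  then show "expsum i (p (mult_red g v)) - expsum i (p v) =
             expsum i (p (mult_red g v')) - expsum i (p v')"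
    using expsum_conj_into [OF e(1) v, of i] expsum_conj_into [OF e'(1) mult_red_in_FG [OF g v], of i]
      e(2) e'(2) by simp
qed

lemma ab_affine: "ab_affine d p"
  unfolding ab_affine_def
proof (intro ballI allI impI)
  fix x v i assume x: "x \<in> FG d" and v: "v \<in> FG d" and i: "i < d"
  let ?f = "\<lambda>v. expsum i (p (mult_red x v)) - expsum i (p v)"
  have "harmonic d ?f"
    using harmonic_diff harmonic_left_translate harmonic_expsum_AutT [OF aut] x by blast
  then have "?f v = ?f []"
    using harmonic_finite_range_imp_constant finite_range_expsum_increment [OF x i] v by blast
  then show "expsum i (p (mult_red x v)) = expsum i (p v) + expsum i (p x) - expsum i (p [])"
    using x by (simp add: mult_red_Nil_right FG_reduced)
qed

end

section \<open>Rigidity of automorphisms that are affine on the abelianization\<close>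

lemma ab_affine_increment:
  assumes "ab_affine d p" "x \<in> FG d" "y \<in> FG d" "l \<in> letters d" "i < d"
  shows "expsum i (p (mult_red x [l])) - expsum i (p x) =
         expsum i (p (mult_red y [l])) - expsum i (p y)"
  using assms singleton_in_FG by (simp add: ab_affine_def)

lemma AutT_mult_red_letter:
  assumes "p \<in> carrier (AutT d)" "x \<in> FG d" "l \<in> letters d"
  obtains m where "m \<in> letters d" "p (mult_red x [l]) = mult_red (p x) [m]"
proof -
  have "tree_adj d (p x) (p (mult_red x [l]))"
    using assms by (simp add: tree_adj_AutT_iff tree_adj_mult_red_letter mult_red_in_FG
        singleton_in_FG)
  then show ?thesis
    using that by (auto simp: tree_adj_def letters_def)
qed

lemma ab_affine_AutT_eqI:
  assumes p: "p \<in> carrier (AutT d)" and q: "q \<in> carrier (AutT d)"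
    and affine: "ab_affine d p" "ab_affine d q"
    and w: "w \<in> FG d" and agree: "\<And>u. u \<in> insert w (tree_nbrs d w) \<Longrightarrow> p u = q u"
  shows "p = q"
proof -
  have step: "p (mult_red x [l]) = q (mult_red x [l])"
    if x: "x \<in> FG d" "p x = q x" and l: "l \<in> letters d" for x l
  proof -
    obtain m where m: "m \<in> letters d" "p (mult_red x [l]) = mult_red (p x) [m]"
      using AutT_mult_red_letter [OF p x(1) l] .
    obtain m' where m': "m' \<in> letters d" "q (mult_red x [l]) = mult_red (q x) [m']"
      using AutT_mult_red_letter [OF q x(1) l] .
    have wl: "mult_red w [l] \<in> tree_nbrs d w"
      using bij_betw_letters_tree_nbrs [OF w] l by (auto simp: bij_betw_def)
    have "expsum i [m] = expsum i [m']" if i: "i < d" for i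
    proof -
      have "expsum i [m] = expsum i (p (mult_red x [l])) - expsum i (p x)"
        using m by simp
      also have "\<dots> = expsum i (p (mult_red w [l])) - expsum i (p w)"
        using ab_affine_increment [OF affine(1) x(1) w l i] .
      also have "\<dots> = expsum i (q (mult_red w [l])) - expsum i (q w)"
        using agree wl by simp
      also have "\<dots> = expsum i (q (mult_red x [l])) - expsum i (q x)"
        using ab_affine_increment [OF affine(2) w x(1) l i] .
      also have "\<dots> = expsum i [m']"
        using m' by simp
      finally show ?thesis .
    qed
    then have "m = m'"
      using letter_eqI m(1) by blast
    with m m' x(2) show ?thesis
      by simp
  qed
  have "p x = q x" if "x \<in> FG d" for x
    using FG_induct_from [where P = "\<lambda>x. p x = q x"] that w agree step by blast
  then show ?thesis
    using AutT_Bij [OF p] AutT_Bij [OF q] by (metis Bij_imp_extensional extensionalityI)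
qed

section \<open>Commensurators\<close>

lemma lmul_apply [simp]: "w \<in> FG d \<Longrightarrow> lmul d a w = mult_red a w"
  by (simp add: lmul_def)

lemma lmul_Bij: "a \<in> FG d \<Longrightarrow> lmul d a \<in> Bij (FG d)"
proof -
  assume a: "a \<in> FG d"
  have "bij_betw (lmul d a) (FG d) (FG d)"
  proof (rule bij_betw_byWitness [where f' = "lmul d (word_inv a)"])
    show "\<forall>x\<in>FG d. lmul d (word_inv a) (lmul d a x) = x"
      using a by (simp add: mult_red_in_FG mult_red_word_inv_cancel_left FG_reduced)
    show "\<forall>x\<in>FG d. lmul d a (lmul d (word_inv a) x) = x"
      using a mult_red_word_inv_cancel_left [of _ "word_inv a"]
      by (simp add: mult_red_in_FG word_inv_in_FG FG_reduced)
    show "lmul d a ` FG d \<subseteq> FG d" "lmul d (word_inv a) ` FG d \<subseteq> FG d"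
      using a by (auto simp: mult_red_in_FG word_inv_in_FG)
  qed
  then show ?thesis
    by (simp add: Bij_def lmul_def)
qed

lemma lmul_mult_AutT_apply_Nil:
  "a \<in> FG d \<Longrightarrow> b \<in> FG d \<Longrightarrow> (lmul d a \<otimes>\<^bsub>AutT d\<^esub> lmul d b) [] = mult_red a b"
  by (simp add: mult_AutT lmul_Bij compose_def mult_red_Nil_right FG_reduced)

lemma AutT_conj_lmul_apply:
  assumes g: "g \<in> carrier (AutT d)" and a: "a \<in> FG d" and v: "v \<in> FG d"
  shows "(g \<otimes>\<^bsub>AutT d\<^esub> lmul d a \<otimes>\<^bsub>AutT d\<^esub> inv\<^bsub>AutT d\<^esub> g) v
         = g (mult_red a ((inv\<^bsub>AutT d\<^esub> g) v))"
proof -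
  have ginv: "inv\<^bsub>AutT d\<^esub> g \<in> carrier (AutT d)"
    using g by (simp add: group.inv_closed [OF group_AutT])
  have "g \<otimes>\<^bsub>AutT d\<^esub> lmul d a \<in> Bij (FG d)"
    using g a by (simp add: mult_AutT AutT_Bij lmul_Bij compose_Bij)
  then show ?thesis
    using g a v ginv
    by (simp add: mult_AutT AutT_Bij lmul_Bij compose_def AutT_in_FG mult_red_in_FG)
qed

lemma AutT_conj_lmul_eq_lmul_iff:
  assumes g: "g \<in> carrier (AutT d)" and a: "a \<in> FG d" and e: "e \<in> FG d"
  shows "g \<otimes>\<^bsub>AutT d\<^esub> lmul d a \<otimes>\<^bsub>AutT d\<^esub> inv\<^bsub>AutT d\<^esub> g = lmul d e \<longleftrightarrow>
    (\<forall>v\<in>FG d. (inv\<^bsub>AutT d\<^esub> g) (mult_red e v) = mult_red a ((inv\<^bsub>AutT d\<^esub> g) v))"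
    (is "?c = lmul d e \<longleftrightarrow> (\<forall>v\<in>FG d. ?p (mult_red e v) = mult_red a (?p v))")
proof -
  have p: "?p \<in> carrier (AutT d)"
    using g by (simp add: group.inv_closed [OF group_AutT])
  show ?thesis
  proof
    assume eq: "?c = lmul d e"
    show "\<forall>v\<in>FG d. ?p (mult_red e v) = mult_red a (?p v)"
    proof
      fix v assume v: "v \<in> FG d"
      then have "mult_red e v = g (mult_red a (?p v))"
        using AutT_conj_lmul_apply [OF g a v] eq by simp
      then show "?p (mult_red e v) = mult_red a (?p v)"
        using g a v p by (simp add: AutT_in_FG mult_red_in_FG)
    qed
  next
    assume intertwine: "\<forall>v\<in>FG d. ?p (mult_red e v) = mult_red a (?p v)"
    have "?c \<in> Bij (FG d)"
      using g a p by (simp add: mult_AutT AutT_Bij lmul_Bij compose_Bij)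
    moreover have "?c v = lmul d e v" if v: "v \<in> FG d" for v
      using AutT_conj_lmul_apply [OF g a v] intertwine [rule_format, OF v, symmetric] g e v
      by (simp add: mult_red_in_FG)
    ultimately show "?c = lmul d e"
      by (intro extensionalityI [of _ "FG d"]) (auto simp: Bij_def lmul_def)
  qed
qed

lemma conj_set_lmul:
  assumes g: "g \<in> carrier (AutT d)" and A: "A \<subseteq> FG d"
  shows "conj_set (AutT d) g (lmul d ` A) \<inter> lmul d ` A
         = lmul d ` conj_into d (inv\<^bsub>AutT d\<^esub> g) A"
proof -
  let ?p = "inv\<^bsub>AutT d\<^esub> g"
  note conj = AutT_conj_lmul_eq_lmul_iff [OF g]
  show ?thesis
  proof
    show "conj_set (AutT d) g (lmul d ` A) \<inter> lmul d ` A \<subseteq> lmul d ` conj_into d ?p A"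
    proof
      fix x assume "x \<in> conj_set (AutT d) g (lmul d ` A) \<inter> lmul d ` A"
      then obtain a e where a: "a \<in> A" "x = g \<otimes>\<^bsub>AutT d\<^esub> lmul d a \<otimes>\<^bsub>AutT d\<^esub> ?p"
        and e: "e \<in> A" "x = lmul d e"
        by (auto simp: conj_set_def)
      then have "\<forall>v\<in>FG d. ?p (mult_red e v) = mult_red a (?p v)"
        using conj [OF subsetD [OF A a(1)] subsetD [OF A e(1)]] by simp
      with a(1) e show "x \<in> lmul d ` conj_into d ?p A"
        by (auto simp: conj_into_def)
    qed
    show "lmul d ` conj_into d ?p A \<subseteq> conj_set (AutT d) g (lmul d ` A) \<inter> lmul d ` A"
    proof
      fix x assume "x \<in> lmul d ` conj_into d ?p A"
      then obtain e a where e: "e \<in> A" "x = lmul d e"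
        and a: "a \<in> A" "\<forall>v\<in>FG d. ?p (mult_red e v) = mult_red a (?p v)"
        by (auto simp: conj_into_def)
      then have "x = g \<otimes>\<^bsub>AutT d\<^esub> lmul d a \<otimes>\<^bsub>AutT d\<^esub> ?p"
        using conj [OF subsetD [OF A a(1)] subsetD [OF A e(1)]] by simp
      with a(1) have "x \<in> conj_set (AutT d) g (lmul d ` A)"
        by (auto simp: conj_set_def)
      with e show "x \<in> conj_set (AutT d) g (lmul d ` A) \<inter> lmul d ` A"
        by blast
    qed
  qed
qed

lemma finite_right_translates_if_finite_index:
  assumes B: "B \<subseteq> FG d" and A: "A \<subseteq> FG d"
    and fin: "finite_index (AutT d) (lmul d ` B) (lmul d ` A)"
  shows "finite (right_translates B A)"
proof -
  let ?G = "(AutT d)\<lparr>carrier := lmul d ` A\<rparr>"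
  have coset: "(\<lambda>f. f []) ` (lmul d ` B #>\<^bsub>?G\<^esub> lmul d y) = (\<lambda>e. mult_red e y) ` B"
    if y: "y \<in> A" for y
  proof -
    have "lmul d ` B #>\<^bsub>?G\<^esub> lmul d y = (\<lambda>b. lmul d b \<otimes>\<^bsub>AutT d\<^esub> lmul d y) ` B"
      unfolding r_coset_def by auto
    then have "(\<lambda>f. f []) ` (lmul d ` B #>\<^bsub>?G\<^esub> lmul d y)
        = (\<lambda>b. (lmul d b \<otimes>\<^bsub>AutT d\<^esub> lmul d y) []) ` B"
      by (simp add: image_image)
    also have "\<dots> = (\<lambda>e. mult_red e y) ` B"
      using y A B by (intro image_cong) (auto intro!: lmul_mult_AutT_apply_Nil)
    finally show ?thesis .
  qed
  have "right_translates B A \<subseteq> (\<lambda>C. (\<lambda>f. f []) ` C) ` (rcosets\<^bsub>?G\<^esub> (lmul d ` B))"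
  proof
    fix X assume "X \<in> right_translates B A"
    then obtain y where y: "y \<in> A" "X = (\<lambda>e. mult_red e y) ` B"
      by (auto simp: right_translates_def)
    then have "X = (\<lambda>f. f []) ` (lmul d ` B #>\<^bsub>?G\<^esub> lmul d y)"
      using coset [OF y(1)] by simp
    moreover have "lmul d ` B #>\<^bsub>?G\<^esub> lmul d y \<in> rcosets\<^bsub>?G\<^esub> (lmul d ` B)"
      using y unfolding RCOSETS_def by auto
    ultimately show "X \<in> (\<lambda>C. (\<lambda>f. f []) ` C) ` (rcosets\<^bsub>?G\<^esub> (lmul d ` B))"
      by (rule image_eqI)
  qed
  with fin show ?thesis
    unfolding finite_index_def by (meson finite_imageI finite_subset)
qed

lemma finite_right_translates_if_Comm:
  assumes "g \<in> Comm (AutT d) (lmul d ` A)" and "A \<subseteq> FG d"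
  shows "finite (right_translates (conj_into d (inv\<^bsub>AutT d\<^esub> g) A) A)"
proof -
  have g: "g \<in> carrier (AutT d)"
    and "finite_index (AutT d) (conj_set (AutT d) g (lmul d ` A) \<inter> lmul d ` A) (lmul d ` A)"
    using assms(1) by (simp_all add: Comm_def)
  then have "finite_index (AutT d) (lmul d ` conj_into d (inv\<^bsub>AutT d\<^esub> g) A) (lmul d ` A)"
    by (simp add: conj_set_lmul [OF g assms(2)])
  moreover have "conj_into d (inv\<^bsub>AutT d\<^esub> g) A \<subseteq> FG d"
    using assms(2) by (auto simp: conj_into_def)
  ultimately show ?thesis
    using finite_right_translates_if_finite_index assms(2) by blast
qed

lemma commensurating_aut_inv:
  assumes "g \<in> Comm (AutT d) (Kd d) \<inter> Comm (AutT d) (Gamma d)"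
  shows "commensurating_aut d (inv\<^bsub>AutT d\<^esub> g)"
proof
  show "inv\<^bsub>AutT d\<^esub> g \<in> carrier (AutT d)"
    using assms by (simp add: Comm_def group.inv_closed [OF group_AutT])
  show "finite (right_translates (conj_into d (inv\<^bsub>AutT d\<^esub> g) (FG d)) (FG d))"
    using assms by (intro finite_right_translates_if_Comm) (simp_all add: Gamma_def)
  show "finite (right_translates (conj_into d (inv\<^bsub>AutT d\<^esub> g) (ab_kernel d)) (ab_kernel d))"
    using assms by (intro finite_right_translates_if_Comm) (simp_all add: Kd_eq ab_kernel_subset_FG)
qed

lemma AutT_inv_eq_on_image:
  assumes f: "f \<in> carrier (AutT d)" and g: "g \<in> carrier (AutT d)"
    and S: "S \<subseteq> FG d" and agree: "\<forall>x\<in>S. f x = g x" and y: "y \<in> g ` S"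
  shows "(inv\<^bsub>AutT d\<^esub> f) y = (inv\<^bsub>AutT d\<^esub> g) y"
proof -
  obtain x where x: "x \<in> S" "y = g x"
    using y by blast
  with agree have "y = f x"
    by simp
  with x f g S show ?thesis
    by (metis AutT_inv_apply_left subsetD)
qed

lemma Comm_Kd_Gamma_eqI:
  assumes gS: "g \<in> Comm (AutT d) (Kd d) \<inter> Comm (AutT d) (Gamma d)"
    and hS: "h \<in> Comm (AutT d) (Kd d) \<inter> Comm (AutT d) (Gamma d)"
    and agree: "\<forall>x\<in>insert [] (tree_nbrs d []). h x = g x"
  shows "h = g"
proof -
  have g: "g \<in> carrier (AutT d)" and h: "h \<in> carrier (AutT d)"
    using gS hS by (simp_all add: Comm_def)
  have "g ` insert [] (tree_nbrs d []) = insert (g []) (tree_nbrs d (g []))"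
    using bij_betw_AutT_tree_nbrs [OF g Nil_in_FG] by (simp add: bij_betw_def)
  then have "(inv\<^bsub>AutT d\<^esub> g) u = (inv\<^bsub>AutT d\<^esub> h) u"
    if "u \<in> insert (g []) (tree_nbrs d (g []))" for u
    using AutT_inv_eq_on_image [OF h g, of "insert [] (tree_nbrs d [])"] agree that
    by (auto simp: tree_nbrs_def)
  then have "inv\<^bsub>AutT d\<^esub> g = inv\<^bsub>AutT d\<^esub> h"
    using ab_affine_AutT_eqI commensurating_aut.ab_affine commensurating_aut.aut
      commensurating_aut_inv gS hS AutT_in_FG [OF g Nil_in_FG] by metis
  then show "h = g"
    using group.inv_inv [OF group_AutT] g h by metis
qed

theorem proposition5p11:
  fixes d :: nat
  assumes "d \<ge> 1"
  shows "discrete_in_AutT d (Comm (AutT d) (Kd d) \<inter> Comm (AutT d) (Gamma d))"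
  unfolding discrete_in_AutT_def
proof
  let ?S = "Comm (AutT d) (Kd d) \<inter> Comm (AutT d) (Gamma d)"
  let ?F = "insert [] (tree_nbrs d [])"
  fix g assume "g \<in> ?S"
  then have "\<forall>h\<in>?S. (\<forall>x\<in>?F. h x = g x) \<longrightarrow> h = g"
    using Comm_Kd_Gamma_eqI by blast
  moreover have "finite ?F" "?F \<subseteq> FG d"
    using finite_tree_nbrs by (auto simp: tree_nbrs_def)
  ultimately show "\<exists>F. finite F \<and> F \<subseteq> FG d \<and> (\<forall>h\<in>?S. (\<forall>x\<in>F. h x = g x) \<longrightarrow> h = g)"
    by blast
qed

end
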